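(* Let $g$ be a growth control function and $(p_j)_{j\in\mathbb{N}_0}$ a strictly increasing sequence of integers with $p_0=0$, and let $\boldsymbol{M}$ be the sequence with $M_0=1$ whose quotients are $m_p=g(p_j)$ for $p_j\le p<p_{j+1}$, $j\in\mathbb{N}_0$ (so $M_p=m_0\cdots m_{p-1}$). If $\sup_{j\in\mathbb{N}}p_{j+1}/p_j=+\infty$, then $\gamma(\boldsymbol{M})=0$.
   Context: A growth control function is a strictly increasing function $g\colon[0,\infty)\to[1,\infty)$ with $g(0)=1$ and $\lim_{t\to\infty}g(t)=\infty$. A sequence $(c_p)$ is almost increasing if there is $a>0$ with $c_p\le ac_q$ for all $q\ge p$. For a sequence with quotients $m_p$, $\gamma(\boldsymbol{M})=\sup\{\mu>0:(m_p/(p+1)^\mu)_p\text{ is almost increasing}\}\in[0,\infty]$, with the value $0$ if the set is empty. *)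

theory Defs
  imports "HOL-Analysis.Analysis"
begin

definition growth_control :: "(real \<Rightarrow> real) \<Rightarrow> bool" where
  "growth_control g \<longleftrightarrow> strict_mono_on {0..} g \<and> g 0 = 1 \<and> (\<forall>t\<ge>0. g t \<ge> 1)
     \<and> (g \<longlongrightarrow> \<infinity>) at_top"

definition almost_increasing :: "(nat \<Rightarrow> real) \<Rightarrow> bool" where
  "almost_increasing c \<longleftrightarrow> (\<exists>a>0. \<forall>p q. p \<le> q \<longrightarrow> c p \<le> a * c q)"

text \<open>gamma index of a weight sequence, given through its quotient sequence m\<close>
definition gamma_idx :: "(nat \<Rightarrow> real) \<Rightarrow> ereal" where
  "gamma_idx m = (let S = {\<mu>::real. \<mu> > 0 \<and>
        almost_increasing (\<lambda>p. m p / (real p + 1) powr \<mu>)}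
     in if S = {} then 0 else Sup (ereal ` S))"

end

theory Submission
  imports Defs
begin

text \<open>If \<open>m\<^sub>p / (p+1)\<^sup>\<mu>\<close> is almost increasing with constant \<open>a\<close>, then on any stretch
  \<open>p \<le> q\<close> where \<open>m\<close> is constant and positive we get \<open>(q+1)/(p+1) \<le> a\<^bsup>1/\<mu>\<^esup>\<close>. The quotients
  of \<open>M\<close> are constant on the blocks \<open>[p\<^sub>j, p\<^sub>j\<^sub>+\<^sub>1)\<close>, so this bounds \<open>p\<^sub>j\<^sub>+\<^sub>1/p\<^sub>j\<close> uniformly,
  contradicting the unbounded ratios; hence no \<open>\<mu> > 0\<close> is admissible.\<close>

lemma growth_control_pos:
  assumes "growth_control g" and "t \<ge> 0"
  shows "g t > 0"
  using assms unfolding growth_control_def by (metis less_le_trans zero_less_one)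

lemma gamma_idx_eq_0I:
  assumes "\<And>\<mu>. \<mu> > 0 \<Longrightarrow> \<not> almost_increasing (\<lambda>p. m p / (real p + 1) powr \<mu>)"
  shows "gamma_idx m = 0"
  using assms unfolding gamma_idx_def Let_def by auto

lemma almost_increasing_powr_const_stretch:
  fixes c :: "nat \<Rightarrow> real"
  assumes "\<mu> > 0" and "almost_increasing (\<lambda>p. c p / (real p + 1) powr \<mu>)"
  obtains b where "b > 0"
    and "\<And>p q. p \<le> q \<Longrightarrow> c p = c q \<Longrightarrow> c q > 0 \<Longrightarrow> real q + 1 \<le> b * (real p + 1)"
proof -
  obtain a where "a > 0"
    and a: "\<And>p q. p \<le> q \<Longrightarrow> c p / (real p + 1) powr \<mu> \<le> a * (c q / (real q + 1) powr \<mu>)"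
    using assms(2) unfolding almost_increasing_def by blast
  define b where "b = a powr (1 / \<mu>)"
  have "real q + 1 \<le> b * (real p + 1)" if "p \<le> q" "c p = c q" "c q > 0" for p q
  proof -
    have "c q / (real p + 1) powr \<mu> \<le> a * (c q / (real q + 1) powr \<mu>)"
      using a[OF \<open>p \<le> q\<close>] \<open>c p = c q\<close> by simp
    then have "(real q + 1) powr \<mu> \<le> a * (real p + 1) powr \<mu>"
      using \<open>c q > 0\<close> by (simp add: field_simps)
    then have "((real q + 1) powr \<mu>) powr (1 / \<mu>) \<le> (a * (real p + 1) powr \<mu>) powr (1 / \<mu>)"
      using \<open>\<mu> > 0\<close> by (intro powr_mono2) auto
    then show ?thesis
      using \<open>a > 0\<close> \<open>\<mu> > 0\<close> by (simp add: b_def powr_powr powr_mult)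
  qed
  moreover have "b > 0"
    using \<open>a > 0\<close> by (simp add: b_def)
  ultimately show thesis
    using that by blast
qed

theorem proposition4p9:
  fixes g :: "real \<Rightarrow> real" and pj :: "nat \<Rightarrow> nat" and m :: "nat \<Rightarrow> real"
  assumes "growth_control g"
    and "strict_mono pj" and "pj 0 = 0"
    and "\<And>j p. pj j \<le> p \<Longrightarrow> p < pj (Suc j) \<Longrightarrow> m p = g (real (pj j))"
    and "\<forall>B::real. \<exists>j\<ge>1. real (pj (Suc j)) / real (pj j) > B"
  shows "gamma_idx m = 0"
proof (rule gamma_idx_eq_0I, rule notI)
  fix \<mu> :: real
  assume "\<mu> > 0" and "almost_increasing (\<lambda>p. m p / (real p + 1) powr \<mu>)"
  then obtain b where "b > 0"
    and b: "\<And>p q. p \<le> q \<Longrightarrow> m p = m q \<Longrightarrow> m q > 0 \<Longrightarrow> real q + 1 \<le> b * (real p + 1)"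
    by (rule almost_increasing_powr_const_stretch) blast
  obtain j where "j \<ge> 1" and ratio: "real (pj (Suc j)) / real (pj j) > 2 * b"
    using assms(5) by blast
  have block: "pj j < pj (Suc j)" and "pj j \<ge> 1"
    using assms(2,3) \<open>j \<ge> 1\<close> strict_monoD[OF assms(2), of 0 j] by (auto simp: strict_mono_Suc_iff)
  have "m (pj j) = g (real (pj j))" and "m (pj (Suc j) - 1) = g (real (pj j))"
    using assms(4) block by auto
  then have "real (pj (Suc j) - 1) + 1 \<le> b * (real (pj j) + 1)"
    using b[of "pj j" "pj (Suc j) - 1"] block growth_control_pos[OF assms(1)] by simp
  also have "\<dots> \<le> 2 * b * real (pj j)"
    using \<open>pj j \<ge> 1\<close> \<open>b > 0\<close> by (simp add: algebra_simps)
  finally show False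
    using ratio block \<open>pj j \<ge> 1\<close> by (simp add: of_nat_diff field_simps)
qed

end
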